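(* Let $A=(a(x),dF(x))$ and $B=(b(x),dF(x))$ be games, assume $f(p)\ge h(p)$ for each $p\in[0,1]$, and let $L:=\sup_{0<p<1}g(p)+1$. Then $V(p,t,u):=\int\log\big(\frac{pa(x)+(1-p)b(x)}{u}t-t+1\big)\,dF(x)$ is continuous on $\overline{D}=\{(p,t,u):0\le p\le1,\ 0\le t\le1,\ f(p)\le u\le L\}$.
   Context: A game is a pair $(a(x),dF(x))$ with $dF$ a probability measure on $\mathbb{R}$ and $a\ge0$ measurable with finite positive integral. A real $r$ is fixed; conventions $\exp(-\infty)=0$, $1/(+\infty)=0$. For $p\in[0,1]$ put $c_p(x):=pa(x)+(1-p)b(x)$, $f(p):=\exp(\int\log c_p\,dF)/e^r$, $h(p):=1/\int\frac{1}{c_p(x)}dF(x)$. $g(p)$ denotes the value $u>0$ such that for some $t_u$ (with $0<t_u\le1$) the system $\exp\big(\int\log(\frac{c_p(x)}{u}t_u-t_u+1)\,dF(x)\big)=e^r$, $\int\frac{c_p(x)-u}{c_p(x)t_u-ut_u+u}\,dF(x)=0$ holds; such a solution is unique when it exists, and it exists for every $p$ under the hypothesis $f\ge h$. *)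

theory Defs
  imports "HOL-Probability.Probability"
begin

text \<open>A game (a(x), dF(x)): dF is a probability measure on the reals (fixed separately),
  a is nonnegative, measurable, with finite positive integral.\<close>
definition game :: "real measure \<Rightarrow> (real \<Rightarrow> real) \<Rightarrow> bool" where
  "game F a \<longleftrightarrow> a \<in> borel_measurable F \<and> (\<forall>x. 0 \<le> a x) \<and> integrable F a \<and> integral\<^sup>L F a > 0"

definition cp :: "(real \<Rightarrow> real) \<Rightarrow> (real \<Rightarrow> real) \<Rightarrow> real \<Rightarrow> real \<Rightarrow> real" where
  "cp a b p x = p * a x + (1 - p) * b x"

definition elog :: "real \<Rightarrow> ereal" where
  "elog x = (if 0 < x then ereal (ln x) else -\<infinity>)"

definition eint :: "real measure \<Rightarrow> (real \<Rightarrow> ereal) \<Rightarrow> ereal" where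
  "eint M g = enn2ereal (\<integral>\<^sup>+ x. e2ennreal (g x) \<partial>M) - enn2ereal (\<integral>\<^sup>+ x. e2ennreal (- g x) \<partial>M)"

definition fF :: "real measure \<Rightarrow> (real \<Rightarrow> real) \<Rightarrow> (real \<Rightarrow> real) \<Rightarrow> real \<Rightarrow> real \<Rightarrow> real" where
  "fF F a b r p = (case eint F (\<lambda>x. elog (cp a b p x)) of
       ereal y \<Rightarrow> exp y / exp r
     | PInfty \<Rightarrow> 0
     | MInfty \<Rightarrow> 0)"

text \<open>h(p) = 1 / \<integral> 1/c_p dF, with 1/0 = infinity and 1/infinity = 0.\<close>
definition hF :: "real measure \<Rightarrow> (real \<Rightarrow> real) \<Rightarrow> (real \<Rightarrow> real) \<Rightarrow> real \<Rightarrow> real" where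
  "hF F a b p = enn2real (inverse (\<integral>\<^sup>+ x. inverse (ennreal (cp a b p x)) \<partial>F))"

definition VF :: "real measure \<Rightarrow> (real \<Rightarrow> real) \<Rightarrow> (real \<Rightarrow> real) \<Rightarrow> real \<Rightarrow> real \<Rightarrow> real \<Rightarrow> ereal" where
  "VF F a b p t u = eint F (\<lambda>x. elog (cp a b p x / u * t - t + 1))"

definition gF :: "real measure \<Rightarrow> (real \<Rightarrow> real) \<Rightarrow> (real \<Rightarrow> real) \<Rightarrow> real \<Rightarrow> real \<Rightarrow> real" where
  "gF F a b r p = (THE u. 0 < u \<and> (\<exists>t. 0 < t \<and> t \<le> 1 \<and>
       VF F a b p t u = ereal r \<and>
       integrable F (\<lambda>x. (cp a b p x - u) / (cp a b p x * t - u * t + u)) \<and>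
       (\<integral>x. (cp a b p x - u) / (cp a b p x * t - u * t + u) \<partial>F) = 0))"

end

theory Submission
  imports Defs
begin

text \<open>Pointwise in x, the integrand log(c_p(x)/u t - t + 1) depends continuously on (p, t, u)
  as an extended real, log 0 being -\<infinity>; V is the difference of the integrals of its positive
  and negative parts, and the claim holds already on the larger set where only u > 0 is required.
  The positive parts are dominated by 2(a + b)/u + 1, so their integrals converge and stay finite.
  For the negative parts: if t < 1 the argument of the logarithm stays above (1 - t)/2 nearby, so
  they are uniformly bounded; if t = 1 it stays above one eighth of c_p(x)/u, so they are dominated
  by the negative part at the limit plus ln 8, which is integrable unless that integral is
  infinite, and then Fatou's lemma forces divergence to \<infinity> as well.\<close>

lemma measurable_elog [measurable (raw)]:
  "f \<in> M \<rightarrow>\<^sub>M borel \<Longrightarrow> (\<lambda>x. elog (f x)) \<in> M \<rightarrow>\<^sub>M borel"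
  unfolding elog_def by (rule measurable_If) auto

lemma tendsto_elog:
  assumes "(f \<longlongrightarrow> y) F"
  shows "((\<lambda>n. elog (f n)) \<longlongrightarrow> elog y) F"
proof (cases "y > 0")
  case True
  have "((\<lambda>n. ereal (ln (f n))) \<longlongrightarrow> ereal (ln y)) F"
    by (intro tendsto_intros assms) (use True in auto)
  moreover have "\<forall>\<^sub>F n in F. ereal (ln (f n)) = elog (f n)"
    using order_tendstoD(1)[OF assms True] by eventually_elim (simp add: elog_def)
  ultimately have "((\<lambda>n. elog (f n)) \<longlongrightarrow> ereal (ln y)) F"
    by (rule Lim_transform_eventually)
  then show ?thesis using True by (simp add: elog_def)
next
  case False
  then have "elog y = -\<infinity>" by (simp add: elog_def)
  show ?thesis unfolding \<open>elog y = -\<infinity>\<close> tendsto_MInfty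
  proof
    fix r
    have "\<forall>\<^sub>F n in F. f n < exp r"
      using order_tendstoD(2)[OF assms, of "exp r"] False by (meson exp_gt_zero not_less order_le_less_trans)
    then show "\<forall>\<^sub>F n in F. elog (f n) < ereal r"
      by eventually_elim (auto simp: elog_def, metis ln_exp ln_less_cancel_iff exp_gt_zero)
  qed
qed

lemma e2ennreal_elog_le: "e2ennreal (elog y) \<le> ennreal (max y 0)"
proof (cases "y > 0")
  case True
  have "ln y \<le> y" using ln_le_minus_one[OF True] by linarith
  then show ?thesis using True by (simp add: elog_def)
qed (simp add: elog_def e2ennreal_neg)

lemma e2ennreal_uminus_elog_le:
  assumes "0 < c" "c \<le> y"
  shows "e2ennreal (- elog y) \<le> ennreal (- ln c)"
  using assms by (simp add: elog_def ennreal_leI)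

lemma e2ennreal_uminus_elog_le_scaled:
  assumes "0 < k" "z / k \<le> y"
  shows "e2ennreal (- elog y) \<le> e2ennreal (- elog z) + ennreal (ln k)"
proof (cases "z > 0")
  case True
  have "0 < z / k" using assms True by simp
  then have "y > 0" "ln (z / k) \<le> ln y" using assms by simp_all
  then have "- ln y \<le> - ln z + ln k" using True assms by (simp add: ln_div)
  then have "ennreal (- ln y) \<le> ennreal (- ln z + ln k)" by (rule ennreal_leI)
  also have "\<dots> \<le> ennreal (- ln z) + ennreal (ln k)"
    by (auto simp: ennreal_plus_if intro!: ennreal_leI)
  finally show ?thesis using True \<open>y > 0\<close> by (simp add: elog_def)
qed (simp add: elog_def)

lemma nn_integral_tendsto_dominated_unless_infinite:
  fixes u :: "nat \<Rightarrow> 'a \<Rightarrow> ennreal"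
  assumes [measurable]: "\<And>i. u i \<in> borel_measurable M" "u' \<in> borel_measurable M"
    and lim: "\<And>x. x \<in> space M \<Longrightarrow> (\<lambda>i. u i x) \<longlonglongrightarrow> u' x"
    and dom: "(\<integral>\<^sup>+x. u' x \<partial>M) < \<infinity> \<Longrightarrow> \<exists>w\<in>borel_measurable M. (\<integral>\<^sup>+x. w x \<partial>M) < \<infinity> \<and>
                (\<forall>\<^sub>F i in sequentially. \<forall>x\<in>space M. u i x \<le> w x)"
  shows "(\<lambda>i. \<integral>\<^sup>+x. u i x \<partial>M) \<longlonglongrightarrow> (\<integral>\<^sup>+x. u' x \<partial>M)"
proof (cases "(\<integral>\<^sup>+x. u' x \<partial>M) < \<infinity>")
  case True
  then obtain w k where [measurable]: "w \<in> borel_measurable M" and w: "(\<integral>\<^sup>+x. w x \<partial>M) < \<infinity>"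
    and k: "\<And>i x. i \<ge> k \<Longrightarrow> x \<in> space M \<Longrightarrow> u i x \<le> w x"
    using dom unfolding eventually_sequentially by blast
  have "(\<lambda>i. \<integral>\<^sup>+x. u (i + k) x \<partial>M) \<longlonglongrightarrow> (\<integral>\<^sup>+x. u' x \<partial>M)"
  proof (rule nn_integral_dominated_convergence[where w = w])
    show "AE x in M. u (i + k) x \<le> w x" for i by (intro AE_I2 k) auto
    show "AE x in M. (\<lambda>i. u (i + k) x) \<longlonglongrightarrow> u' x"
      using lim by (auto intro!: LIMSEQ_ignore_initial_segment)
  qed (use w in auto)
  then show ?thesis by (rule LIMSEQ_offset)
next
  case False
  then have top: "(\<integral>\<^sup>+x. u' x \<partial>M) = top" by (simp add: less_top[symmetric])
  have "(\<integral>\<^sup>+x. u' x \<partial>M) = (\<integral>\<^sup>+x. liminf (\<lambda>i. u i x) \<partial>M)"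
    by (intro nn_integral_cong) (metis lim lim_imp_Liminf trivial_limit_sequentially)
  then have liminf: "liminf (\<lambda>i. \<integral>\<^sup>+x. u i x \<partial>M) = top"
    using nn_integral_liminf[of u M] top by (simp add: top_unique)
  then have "limsup (\<lambda>i. \<integral>\<^sup>+x. u i x \<partial>M) = top"
    using Liminf_le_Limsup[of sequentially "\<lambda>i. \<integral>\<^sup>+x. u i x \<partial>M"] by (simp add: top_unique)
  with liminf top show ?thesis by (intro Liminf_eq_Limsup) auto
qed

lemma eint_tendsto:
  fixes M :: "real measure" and g :: "nat \<Rightarrow> real \<Rightarrow> ereal"
  assumes [measurable]: "\<And>i. g i \<in> borel_measurable M" "g' \<in> borel_measurable M"
    and lim: "\<And>x. x \<in> space M \<Longrightarrow> (\<lambda>i. g i x) \<longlonglongrightarrow> g' x"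
    and w_measurable [measurable]: "w \<in> borel_measurable M" and w: "(\<integral>\<^sup>+x. w x \<partial>M) < \<infinity>"
    and pos_dom: "\<forall>\<^sub>F i in sequentially. \<forall>x\<in>space M. e2ennreal (g i x) \<le> w x"
    and neg_dom: "(\<integral>\<^sup>+x. e2ennreal (- g' x) \<partial>M) < \<infinity> \<Longrightarrow>
       \<exists>v\<in>borel_measurable M. (\<integral>\<^sup>+x. v x \<partial>M) < \<infinity> \<and>
         (\<forall>\<^sub>F i in sequentially. \<forall>x\<in>space M. e2ennreal (- g i x) \<le> v x)"
  shows "(\<lambda>i. eint M (g i)) \<longlonglongrightarrow> eint M g'"
proof -
  have pos_lim: "(\<lambda>i. e2ennreal (g i x)) \<longlonglongrightarrow> e2ennreal (g' x)" if "x \<in> space M" for x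
    using lim[OF that] by (intro tendsto_intros)
  have "e2ennreal (g' x) \<le> w x" if x: "x \<in> space M" for x
  proof (rule tendsto_upperbound[OF pos_lim[OF x]])
    show "\<forall>\<^sub>F i in sequentially. e2ennreal (g i x) \<le> w x"
      using pos_dom by (rule eventually_mono) (use x in blast)
  qed simp
  then have "(\<integral>\<^sup>+x. e2ennreal (g' x) \<partial>M) \<le> (\<integral>\<^sup>+x. w x \<partial>M)"
    by (rule nn_integral_mono)
  also note w
  finally have "(\<integral>\<^sup>+x. e2ennreal (g' x) \<partial>M) < \<infinity>" .
  moreover have "(\<lambda>i. \<integral>\<^sup>+x. e2ennreal (g i x) \<partial>M) \<longlonglongrightarrow> (\<integral>\<^sup>+x. e2ennreal (g' x) \<partial>M)"
  proof (rule nn_integral_tendsto_dominated_unless_infinite)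
    show "\<exists>w\<in>borel_measurable M. (\<integral>\<^sup>+x. w x \<partial>M) < \<infinity> \<and>
        (\<forall>\<^sub>F i in sequentially. \<forall>x\<in>space M. e2ennreal (g i x) \<le> w x)"
      using w_measurable w pos_dom by blast
  qed (use pos_lim in auto)
  moreover have "(\<lambda>i. \<integral>\<^sup>+x. e2ennreal (- g i x) \<partial>M) \<longlonglongrightarrow> (\<integral>\<^sup>+x. e2ennreal (- g' x) \<partial>M)"
    by (rule nn_integral_tendsto_dominated_unless_infinite[OF _ _ _ neg_dom])
      (use lim in \<open>auto intro: tendsto_e2ennrealI\<close>)
  ultimately show ?thesis
    unfolding eint_def by (intro tendsto_diff_ereal_general tendsto_enn2erealI) (auto simp: less_top)
qed

lemma cp_nonneg:
  assumes "p \<in> {0..1}" "0 \<le> a x" "0 \<le> b x"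
  shows "0 \<le> cp a b p x"
  using assms by (simp add: cp_def)

lemma cp_le_add:
  assumes "p \<in> {0..1}" "0 \<le> a x" "0 \<le> b x"
  shows "cp a b p x \<le> a x + b x"
  using assms mult_left_le_one_le[of "a x" p] mult_left_le_one_le[of "b x" "1 - p"]
  by (simp add: cp_def)

lemma cp_half_le:
  assumes "0 \<le> a x" "0 \<le> b x" "p / 2 \<le> q" "q \<le> (1 + p) / 2"
  shows "cp a b p x / 2 \<le> cp a b q x"
proof -
  have "p / 2 * a x \<le> q * a x" "(1 - p) / 2 * b x \<le> (1 - q) * b x"
    using assms by (intro mult_right_mono; simp)+
  moreover have "cp a b p x / 2 = p / 2 * a x + (1 - p) / 2 * b x"
    by (simp add: cp_def field_simps)
  ultimately show ?thesis unfolding cp_def by linarith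
qed

definition V_arg :: "(real \<Rightarrow> real) \<Rightarrow> (real \<Rightarrow> real) \<Rightarrow> real \<Rightarrow> real \<Rightarrow> real \<Rightarrow> real \<Rightarrow> real" where
  "V_arg a b p t u x = cp a b p x / u * t - t + 1"

lemma VF_eq_eint_V_arg: "VF F a b p t u = eint F (\<lambda>x. elog (V_arg a b p t u x))"
  unfolding VF_def V_arg_def ..

lemma measurable_V_arg [measurable]:
  assumes [measurable]: "a \<in> borel_measurable M" "b \<in> borel_measurable M"
  shows "V_arg a b p t u \<in> borel_measurable M"
  unfolding V_arg_def cp_def by measurable

lemma tendsto_V_arg:
  assumes "P \<longlonglongrightarrow> p" "T \<longlonglongrightarrow> t" "U \<longlonglongrightarrow> u" "u \<noteq> 0"
  shows "(\<lambda>n. V_arg a b (P n) (T n) (U n) x) \<longlonglongrightarrow> V_arg a b p t u x"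
  unfolding V_arg_def cp_def using assms by (intro tendsto_intros)

lemma V_arg_le:
  assumes "q \<in> {0..1}" "s \<in> {0..1}" "0 < u" "u / 2 \<le> v" "0 \<le> a x" "0 \<le> b x"
  shows "V_arg a b q s v x \<le> 2 * (a x + b x) / u + 1"
proof -
  have c: "0 \<le> cp a b q x" "cp a b q x \<le> a x + b x"
    using assms by (simp_all add: cp_nonneg cp_le_add)
  have "cp a b q x / v * s \<le> cp a b q x / v"
    using assms c by (intro mult_left_le) auto
  also have "\<dots> \<le> (a x + b x) / (u / 2)"
    using assms c by (intro frac_le) auto
  also have "\<dots> = 2 * (a x + b x) / u" by simp
  finally show ?thesis using assms(2) by (simp add: V_arg_def)
qed

lemma V_arg_ge:
  assumes "q \<in> {0..1}" "s \<in> {0..1}" "s \<le> \<sigma>" "0 < v" "0 \<le> a x" "0 \<le> b x"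
  shows "1 - \<sigma> \<le> V_arg a b q s v x"
proof -
  have "0 \<le> cp a b q x / v * s"
    using assms cp_nonneg[of q a x b] by simp
  then show ?thesis using assms(3) unfolding V_arg_def by linarith
qed

lemma V_arg_ge_eighth:
  assumes "p \<in> {0..1}" "0 \<le> a x" "0 \<le> b x" "p / 2 \<le> q" "q \<le> (1 + p) / 2"
    and "1 / 2 \<le> s" "s \<le> 1" "0 < v" "v \<le> 2 * u"
  shows "V_arg a b p 1 u x / 8 \<le> V_arg a b q s v x"
proof -
  have "q \<in> {0..1}" using assms by auto
  then have c: "0 \<le> cp a b p x" "0 \<le> cp a b q x"
    using assms by (simp_all add: cp_nonneg)
  have "V_arg a b p 1 u x / 8 = (cp a b p x / 2) / (2 * u) * (1 / 2)" by (simp add: V_arg_def)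
  also have "\<dots> \<le> cp a b q x / v * s"
    using assms c cp_half_le[of a x b p q] by (intro mult_mono frac_le) auto
  finally show ?thesis using assms by (simp add: V_arg_def)
qed

lemma eventually_elog_V_arg_le:
  assumes "\<And>x. 0 \<le> a x" "\<And>x. 0 \<le> b x" "\<And>n. P n \<in> {0..1}" "\<And>n. T n \<in> {0..1}"
    and "U \<longlonglongrightarrow> u" "0 < u"
  shows "\<forall>\<^sub>F n in sequentially. \<forall>x.
    e2ennreal (elog (V_arg a b (P n) (T n) (U n) x)) \<le> ennreal (2 * (a x + b x) / u + 1)"
proof -
  have "\<forall>\<^sub>F n in sequentially. u / 2 < U n"
    using order_tendstoD(1)[OF assms(5), of "u / 2"] assms(6) by simp
  then show ?thesis
  proof eventually_elim
    case (elim n)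
    have "ennreal (max (V_arg a b (P n) (T n) (U n) x) 0) \<le> ennreal (2 * (a x + b x) / u + 1)" for x
      using assms elim V_arg_le[of "P n" "T n" u "U n" a x b] by (intro ennreal_leI) auto
    then show ?case using e2ennreal_elog_le order_trans by blast
  qed
qed

lemma eventually_uminus_elog_V_arg_le_const:
  assumes "\<And>x. 0 \<le> a x" "\<And>x. 0 \<le> b x" "\<And>n. P n \<in> {0..1}" "\<And>n. T n \<in> {0..1}"
    and "\<And>n. 0 < U n" "T \<longlonglongrightarrow> t" "t < 1"
  shows "\<forall>\<^sub>F n in sequentially. \<forall>x.
    e2ennreal (- elog (V_arg a b (P n) (T n) (U n) x)) \<le> ennreal (- ln ((1 - t) / 2))"
proof -
  have "\<forall>\<^sub>F n in sequentially. T n \<le> (1 + t) / 2"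
    using order_tendstoD(2)[OF assms(6), of "(1 + t) / 2"] assms(7) by (auto elim: eventually_mono)
  then show ?thesis
  proof eventually_elim
    case (elim n)
    have "1 - (1 + t) / 2 \<le> V_arg a b (P n) (T n) (U n) x" for x
      using assms elim by (intro V_arg_ge) auto
    moreover have "1 - (1 + t) / 2 = (1 - t) / 2" by (simp add: field_simps)
    ultimately show ?case using assms(7) by (auto intro: e2ennreal_uminus_elog_le)
  qed
qed

lemma eventually_uminus_elog_V_arg_le_limit:
  assumes "\<And>x. 0 \<le> a x" "\<And>x. 0 \<le> b x"
    and P: "P \<longlonglongrightarrow> p" "\<And>n. P n \<in> {0..1}" "p \<in> {0..1}"
    and T: "T \<longlonglongrightarrow> 1" "\<And>n. T n \<in> {0..1}"
    and U: "U \<longlonglongrightarrow> u" "\<And>n. 0 < U n" "0 < u"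
  shows "\<forall>\<^sub>F n in sequentially. \<forall>x. e2ennreal (- elog (V_arg a b (P n) (T n) (U n) x))
    \<le> e2ennreal (- elog (V_arg a b p 1 u x)) + ennreal (ln 8)"
proof -
  have "\<forall>\<^sub>F n in sequentially. p / 2 \<le> P n"
  proof (cases "p = 0")
    case False
    then show ?thesis using order_tendstoD(1)[OF P(1), of "p / 2"] P(3) by (auto elim: eventually_mono)
  qed (use P(2) in simp)
  moreover have "\<forall>\<^sub>F n in sequentially. P n \<le> (1 + p) / 2"
  proof (cases "p = 1")
    case False
    then show ?thesis
      using order_tendstoD(2)[OF P(1), of "(1 + p) / 2"] P(3) by (auto elim: eventually_mono)
  qed (use P(2) in simp)
  moreover have "\<forall>\<^sub>F n in sequentially. 1 / 2 < T n"
    using order_tendstoD(1)[OF T(1), of "1 / 2"] by simp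
  moreover have "\<forall>\<^sub>F n in sequentially. U n < 2 * u"
    using order_tendstoD(2)[OF U(1), of "2 * u"] U(3) by simp
  ultimately show ?thesis
  proof eventually_elim
    case (elim n)
    have "V_arg a b p 1 u x / 8 \<le> V_arg a b (P n) (T n) (U n) x" for x
      using elim assms T(2)[of n] U(2)[of n] by (intro V_arg_ge_eighth) auto
    then show ?case by (auto intro: e2ennreal_uminus_elog_le_scaled)
  qed
qed

lemma VF_tendsto:
  assumes "prob_space F"
    and [measurable]: "a \<in> borel_measurable F" "b \<in> borel_measurable F"
    and a: "\<And>x. 0 \<le> a x" "integrable F a" and b: "\<And>x. 0 \<le> b x" "integrable F b"
    and P: "P \<longlonglongrightarrow> p" "\<And>n. P n \<in> {0..1}" and T: "T \<longlonglongrightarrow> t" "\<And>n. T n \<in> {0..1}"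
    and U: "U \<longlonglongrightarrow> u" "\<And>n. 0 < U n"
    and p: "p \<in> {0..1}" and t: "t \<in> {0..1}" and u: "0 < u"
  shows "(\<lambda>n. VF F a b (P n) (T n) (U n)) \<longlonglongrightarrow> VF F a b p t u"
  unfolding VF_eq_eint_V_arg
proof (rule eint_tendsto[where w = "\<lambda>x. ennreal (2 * (a x + b x) / u + 1)"])
  interpret prob_space F by fact
  have "(\<integral>\<^sup>+x. ennreal (2 * (a x + b x) / u + 1) \<partial>F) = ennreal (\<integral>x. 2 * (a x + b x) / u + 1 \<partial>F)"
    using a b u by (intro nn_integral_eq_integral) auto
  then show "(\<integral>\<^sup>+x. ennreal (2 * (a x + b x) / u + 1) \<partial>F) < \<infinity>" by simp
  show "(\<lambda>n. elog (V_arg a b (P n) (T n) (U n) x)) \<longlonglongrightarrow> elog (V_arg a b p t u x)" for x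
    using u by (intro tendsto_elog tendsto_V_arg P T U) simp
  show "\<forall>\<^sub>F n in sequentially. \<forall>x\<in>space F.
      e2ennreal (elog (V_arg a b (P n) (T n) (U n) x)) \<le> ennreal (2 * (a x + b x) / u + 1)"
    using eventually_elog_V_arg_le[of a b P T U u] a b P T U u by (auto elim: eventually_mono)
  show "\<exists>v\<in>borel_measurable F. (\<integral>\<^sup>+x. v x \<partial>F) < \<infinity> \<and> (\<forall>\<^sub>F n in sequentially. \<forall>x\<in>space F.
      e2ennreal (- elog (V_arg a b (P n) (T n) (U n) x)) \<le> v x)"
    if neg_finite: "(\<integral>\<^sup>+x. e2ennreal (- elog (V_arg a b p t u x)) \<partial>F) < \<infinity>"
  proof (cases "t < 1")
    case True
    then show ?thesis
      using eventually_uminus_elog_V_arg_le_const[of a b P T U t] a b P T U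
      by (intro bexI[of _ "\<lambda>_. ennreal (- ln ((1 - t) / 2))"]) (auto simp: emeasure_space_1 elim: eventually_mono)
  next
    case False
    then have "t = 1" using t by simp
    have "(\<integral>\<^sup>+x. e2ennreal (- elog (V_arg a b p 1 u x)) + ennreal (ln 8) \<partial>F) < \<infinity>"
      using neg_finite \<open>t = 1\<close> by (simp add: nn_integral_add emeasure_space_1)
    then show ?thesis
      using eventually_uminus_elog_V_arg_le_limit[of a b P p T U u] a b P T U p u \<open>t = 1\<close>
      by (intro bexI[of _ "\<lambda>x. e2ennreal (- elog (V_arg a b p 1 u x)) + ennreal (ln 8)"])
        (auto elim: eventually_mono)
  qed
qed measurable

lemma continuous_on_VF:
  assumes "prob_space F"
    and "a \<in> borel_measurable F" "b \<in> borel_measurable F"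
    and "\<And>x. 0 \<le> a x" "integrable F a" "\<And>x. 0 \<le> b x" "integrable F b"
  shows "continuous_on {(p, t, u). p \<in> {0..1} \<and> t \<in> {0..1} \<and> 0 < u}
    (\<lambda>(p, t, u). VF F a b p t u)"
proof (rule continuous_on_sequentiallyI)
  fix X :: "nat \<Rightarrow> real \<times> real \<times> real" and z
  assume X: "\<forall>n. X n \<in> {(p, t, u). p \<in> {0..1} \<and> t \<in> {0..1} \<and> 0 < u}"
    and z: "z \<in> {(p, t, u). p \<in> {0..1} \<and> t \<in> {0..1} \<and> 0 < u}" and lim: "X \<longlonglongrightarrow> z"
  obtain p t u where z_eq: "z = (p, t, u)" by (cases z) auto
  define P T U where "P = (\<lambda>n. fst (X n))" and "T = (\<lambda>n. fst (snd (X n)))"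
    and "U = (\<lambda>n. snd (snd (X n)))"
  have X_eq: "X n = (P n, T n, U n)" for n by (simp add: P_def T_def U_def)
  have "P \<longlonglongrightarrow> p" "T \<longlonglongrightarrow> t" "U \<longlonglongrightarrow> u"
    using tendsto_fst[OF lim] tendsto_fst[OF tendsto_snd[OF lim]] tendsto_snd[OF tendsto_snd[OF lim]]
    by (simp_all add: P_def T_def U_def z_eq)
  then have "(\<lambda>n. VF F a b (P n) (T n) (U n)) \<longlonglongrightarrow> VF F a b p t u"
    using X z z_eq assms by (intro VF_tendsto) (auto simp: X_eq)
  then show "(\<lambda>n. (\<lambda>(p, t, u). VF F a b p t u) (X n)) \<longlonglongrightarrow> (\<lambda>(p, t, u). VF F a b p t u) z"
    by (simp add: X_eq z_eq)
qed

theorem lemmaD15: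
  fixes F :: "real measure" and a b :: "real \<Rightarrow> real" and r :: real
  assumes "prob_space F" and "sets F = sets borel"
    and "game F a" and "game F b"
    and "\<forall>p\<in>{0..1}. fF F a b r p \<ge> hF F a b p"
  shows "continuous_on
     {(p, t, u). 0 \<le> p \<and> p \<le> 1 \<and> 0 \<le> t \<and> t \<le> 1 \<and> 0 < u \<and>
        fF F a b r p \<le> u \<and> u \<le> (SUP q\<in>{0<..<1}. gF F a b r q) + 1}
     (\<lambda>(p, t, u). VF F a b p t u)"
proof (rule continuous_on_subset)
  show "continuous_on {(p, t, u). p \<in> {0..1} \<and> t \<in> {0..1} \<and> 0 < u} (\<lambda>(p, t, u). VF F a b p t u)"
    using assms(1,3,4) by (intro continuous_on_VF) (auto simp: game_def)
qed auto

end
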